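(* If a Collatz trajectory $(n,C(n),C^2(n),\dots)$, $n\in\mathbb{N}^+$, does not contain $1$, then for every $r\in\{2,3,4,6\}$ it contains some element congruent to $r$ modulo $8$.
   Context: $C:\mathbb{N}^+\to\mathbb{N}^+$ is the Collatz function $C(n)=n/2$ for $n$ even and $C(n)=3n+1$ for $n$ odd. *)

theory Defs
  imports Main
begin

definition collatz :: "nat \<Rightarrow> nat" where
  "collatz n = (if even n then n div 2 else 3 * n + 1)"

end

theory Submission
  imports Defs
begin

text \<open>
  Descending from any odd number congruent to 1 modulo 4 (other than 1) leads after
  finitely many steps to a smaller odd number, so a trajectory avoiding 1 hits a number
  \<open>x \<equiv> 3 (mod 4)\<close>. Along the steps \<open>x \<mapsto> (3x + 1)/2\<close> the 2-adic valuation of \<open>x + 1\<close> drops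
  by one, so eventually \<open>x \<equiv> 3 (mod 8)\<close>. Such an \<open>x\<close> is odd, so its predecessor is \<open>2x \<equiv> 6\<close>,
  its successor is \<open>3x + 1 \<equiv> 2\<close>, two steps later one meets a multiple of 4, and halving a
  multiple of 4 eventually gives a number \<open>\<equiv> 4 (mod 8)\<close>.
\<close>

lemma collatz_even [simp]: "even x \<Longrightarrow> collatz x = x div 2"
  and collatz_odd [simp]: "odd x \<Longrightarrow> collatz x = 3 * x + 1"
  by (simp_all add: collatz_def)

lemma collatz_pos: "0 < x \<Longrightarrow> 0 < collatz x"
  by (cases "even x") auto

lemma collatz_preimage_of_odd: "collatz p = x \<Longrightarrow> odd x \<Longrightarrow> p = 2 * x"
  by (cases "even p") auto

lemma nat_power2_odd_decomposition: "0 < (n::nat) \<Longrightarrow> \<exists>t m. n = 2 ^ t * m \<and> odd m"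
proof (induction n rule: less_induct)
  case (less n)
  show ?case
  proof (cases "odd n")
    case True
    then show ?thesis by (metis mult_1 power_0)
  next
    case False
    then obtain k where k: "n = 2 * k" by blast
    with less.prems obtain t m where "k = 2 ^ t * m" "odd m"
      using less.IH[of k] by auto
    with k have "n = 2 ^ Suc t * m \<and> odd m" by simp
    then show ?thesis by blast
  qed
qed

definition collatz_reaches :: "nat \<Rightarrow> nat \<Rightarrow> bool" where
  "collatz_reaches x y \<longleftrightarrow> (\<exists>k. (collatz ^^ k) x = y)"

lemma collatz_reaches_funpow: "collatz_reaches x ((collatz ^^ k) x)"
  unfolding collatz_reaches_def by blast

lemma collatz_reaches_refl: "collatz_reaches x x"
  using collatz_reaches_funpow[of x 0] by simp

lemma collatz_reaches_collatz: "collatz_reaches x (collatz x)"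
  using collatz_reaches_funpow[of x 1] by simp

lemma collatz_reaches_trans:
  "collatz_reaches x y \<Longrightarrow> collatz_reaches y z \<Longrightarrow> collatz_reaches x z"
  unfolding collatz_reaches_def by (metis funpow_add o_apply)

lemma collatz_reaches_odd_halved: "odd x \<Longrightarrow> collatz_reaches x ((3 * x + 1) div 2)"
proof -
  assume "odd x"
  then have "collatz (collatz x) = (3 * x + 1) div 2" by simp
  then show ?thesis
    using collatz_reaches_collatz collatz_reaches_trans by metis
qed

lemma collatz_reaches_pos: "collatz_reaches x y \<Longrightarrow> 0 < x \<Longrightarrow> 0 < y"
proof -
  have "0 < (collatz ^^ k) x" if "0 < x" for k
    using that by (induction k) (simp_all add: collatz_pos)
  then show "collatz_reaches x y \<Longrightarrow> 0 < x \<Longrightarrow> 0 < y"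
    unfolding collatz_reaches_def by blast
qed

lemma collatz_reaches_from_collatz:
  "collatz_reaches (collatz x) y \<Longrightarrow> \<exists>p. collatz_reaches x p \<and> collatz p = y"
  unfolding collatz_reaches_def by (metis funpow_Suc_right funpow_swap1 o_apply)

lemma collatz_reaches_odd_below_half:
  "0 < x \<Longrightarrow> even x \<Longrightarrow> \<exists>z. collatz_reaches x z \<and> odd z \<and> z \<le> x div 2"
proof (induction x rule: less_induct)
  case (less x)
  define h where "h = x div 2"
  have step: "collatz_reaches x h"
    using collatz_reaches_collatz[of x] less.prems by (simp add: h_def)
  show ?case
  proof (cases "odd h")
    case True
    with step show ?thesis by (auto simp: h_def)
  next
    case False
    have "h < x" "0 < h" using less.prems by (auto simp: h_def elim: evenE)
    with False obtain z where "collatz_reaches h z" "odd z" "z \<le> h div 2"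
      using less.IH by blast
    with step show ?thesis
      by (metis collatz_reaches_trans div_le_dividend h_def order_trans)
  qed
qed

lemma collatz_reaches_4_mod_8:
  "0 < x \<Longrightarrow> 4 dvd x \<Longrightarrow> \<exists>y. collatz_reaches x y \<and> y mod 8 = 4"
proof (induction x rule: less_induct)
  case (less x)
  show ?case
  proof (cases "x mod 8 = 4")
    case True
    then show ?thesis using collatz_reaches_refl by blast
  next
    case False
    with less.prems have "even x" "4 dvd x div 2" "x div 2 < x" "0 < x div 2"
      by presburger+
    then obtain y where "collatz_reaches (x div 2) y" "y mod 8 = 4"
      using less.IH by blast
    then show ?thesis
      using collatz_reaches_collatz[of x] \<open>even x\<close> collatz_reaches_trans by fastforce
  qed
qed

lemma collatz_reaches_3_mod_4:
  "0 < x \<Longrightarrow> \<not> collatz_reaches x 1 \<Longrightarrow> \<exists>y. collatz_reaches x y \<and> y mod 4 = 3"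
proof (induction x rule: less_induct)
  case (less x)
  show ?case
  proof (cases "x mod 4 = 3")
    case True
    then show ?thesis using collatz_reaches_refl by blast
  next
    case False
    obtain v where v: "collatz_reaches x v" "0 < v" "even v" "v div 2 < x"
    proof (cases "even x")
      case True
      with less.prems(1) show ?thesis by (intro that) (auto simp: collatz_reaches_refl)
    next
      case odd: False
      have "x \<noteq> 1" using less.prems(2) collatz_reaches_refl by blast
      with False odd have "x mod 4 = 1" "x \<ge> 5" by presburger+
      then have "even ((3 * x + 1) div 2)" "(3 * x + 1) div 2 div 2 < x" by presburger+
      moreover have "collatz_reaches x ((3 * x + 1) div 2)"
        using odd by (rule collatz_reaches_odd_halved)
      ultimately show ?thesis using that by auto
    qed
    then obtain z where z: "collatz_reaches x z" "odd z" "z < x"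
      using collatz_reaches_odd_below_half[of v] collatz_reaches_trans by (meson le_less_trans)
    then have "\<not> collatz_reaches z 1"
      using less.prems(2) collatz_reaches_trans by blast
    with z obtain y where "collatz_reaches z y" "y mod 4 = 3"
      using less.IH[of z] by (auto elim: oddE)
    with z(1) show ?thesis using collatz_reaches_trans by blast
  qed
qed

lemma collatz_reaches_3_mod_8_of_valuation:
  "odd m \<Longrightarrow> x + 1 = 2 ^ (t + 2) * m \<Longrightarrow> \<exists>y. collatz_reaches x y \<and> y mod 8 = 3"
proof (induction t arbitrary: x m)
  case 0
  then have "x mod 8 = 3" by (auto elim!: oddE)
  then show ?case using collatz_reaches_refl by blast
next
  case (Suc t)
  define c where "c = 2 ^ (t + 2) * m"
  have "x + 1 = 2 * c" using Suc.prems(2) by (simp add: c_def)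
  then have "odd x" "(3 * x + 1) div 2 + 1 = 3 * c" by presburger+
  then obtain y where "collatz_reaches ((3 * x + 1) div 2) y" "y mod 8 = 3"
    using Suc.IH[of "3 * m"] Suc.prems(1) by (auto simp: c_def)
  moreover have "collatz_reaches x ((3 * x + 1) div 2)"
    using \<open>odd x\<close> by (rule collatz_reaches_odd_halved)
  ultimately show ?case using collatz_reaches_trans by blast
qed

lemma collatz_reaches_3_mod_8:
  assumes "0 < x" and "\<not> collatz_reaches x 1"
  shows "\<exists>y. collatz_reaches x y \<and> y mod 8 = 3"
proof -
  obtain z where z: "collatz_reaches x z" "z mod 4 = 3"
    using collatz_reaches_3_mod_4 assms by blast
  define q where "q = (z + 1) div 4"
  have "z + 1 = 4 * q" "0 < q" using z(2) unfolding q_def by presburger+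
  moreover obtain t m where "q = 2 ^ t * m" "odd m"
    using nat_power2_odd_decomposition \<open>0 < q\<close> by blast
  ultimately have "z + 1 = 2 ^ (t + 2) * m" by (simp add: power_add)
  then show ?thesis
    using collatz_reaches_3_mod_8_of_valuation[OF \<open>odd m\<close>] z(1) collatz_reaches_trans by blast
qed

lemma collatz_3_mod_8:
  assumes "x mod 8 = 3"
  shows "collatz x mod 8 = 2" and "4 dvd collatz ((3 * x + 1) div 2)"
proof -
  have "odd x" "(3 * x + 1) mod 8 = 2" "odd ((3 * x + 1) div 2)"
    "4 dvd 3 * ((3 * x + 1) div 2) + 1"
    using assms by presburger+
  then show "collatz x mod 8 = 2" and "4 dvd collatz ((3 * x + 1) div 2)" by simp_all
qed

theorem mainTheorem17:
  fixes n :: nat and r :: nat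
  assumes "n > 0"
    and "\<forall>k. (collatz ^^ k) n \<noteq> 1"
    and "r \<in> {2, 3, 4, 6}"
  shows "\<exists>k. (collatz ^^ k) n mod 8 = r"
proof -
  have avoid: "\<not> collatz_reaches n 1"
    using assms(2) by (simp add: collatz_reaches_def)
  \<comment> \<open>start one step in, so that the residue 3 found below has a predecessor\<close>
  have "0 < collatz n" "\<not> collatz_reaches (collatz n) 1"
    using assms(1) avoid collatz_pos collatz_reaches_collatz collatz_reaches_trans by blast+
  then obtain x where x: "collatz_reaches (collatz n) x" "x mod 8 = 3"
    using collatz_reaches_3_mod_8 by blast
  then obtain p where p: "collatz_reaches n p" "collatz p = x"
    using collatz_reaches_from_collatz by blast
  have x_odd: "odd x" using x(2) by presburger
  have res6: "p mod 8 = 6"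
    using collatz_preimage_of_odd[OF p(2) x_odd] x(2) by presburger
  have nx: "collatz_reaches n x" using p collatz_reaches_collatz collatz_reaches_trans by metis
  have res2: "collatz_reaches n (collatz x)"
    using nx collatz_reaches_collatz collatz_reaches_trans by blast
  have "collatz_reaches n (collatz ((3 * x + 1) div 2))"
    using nx collatz_reaches_odd_halved[OF x_odd] collatz_reaches_collatz collatz_reaches_trans
    by blast
  moreover have "0 < collatz ((3 * x + 1) div 2)"
    using calculation assms(1) collatz_reaches_pos by blast
  ultimately obtain q where res4: "collatz_reaches n q" "q mod 8 = 4"
    using collatz_reaches_4_mod_8 collatz_3_mod_8(2)[OF x(2)] collatz_reaches_trans
    by blast
  have "\<exists>y. collatz_reaches n y \<and> y mod 8 = r"
    using assms(3) p(1) res6 nx x(2) res2 collatz_3_mod_8(1)[OF x(2)] res4 by auto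
  then show ?thesis by (auto simp: collatz_reaches_def)
qed

end
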